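(* Assume the setting below, and assume that the Agent's recursion (for the contracts under consideration) and the Principal's recursion admit solutions with all essential suprema attained at each $t\in\mathbb{T}$. Then the Principal's optimal utility at time $0$ (over all incentive-compatible and individually rational contracts) equals $W_0-R+h_0$. Moreover, letting $(\beta_t,A_t,\Gamma_{t+1})_{t\in\mathbb{T}}$ be maximizers attaining $h_t$ in the Principal's recursion and defining $$\Theta:=\sum_{0\le t<T}\big[\Gamma_{t+1}-U^a_t(\Gamma_{t+1})+c_t(A_t)\big],$$ the contract $S(\bar A):=R+\Theta+\sum_{t<T}\beta_t\big[\Delta W^{\bar A}_{t+1}-A_t\Delta\tilde P_{t+1}\big]$ is optimal for the Principal among incentive-compatible and individually rational contracts; under $S$ the Agent's optimal effort is $A=(A_t)$ and his optimal time-$0$ utility equals $R$.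
   Context: Fix $T\in\mathbb{N}$, $\mathbb{T}:=\{0,\dots,T-1\}$, a probability space carrying an $\mathbb{R}^N$-valued strictly positive price process $P=(P_t)_{t=0}^T$ with generated filtration $(\mathcal{F}_t)$ and $\mathbb{E}[P_{t+1}\mid\mathcal{F}_t]$ a.s. finite. $\Delta\tilde P_{t+1}:=diag(P_t)^{-1}(P_{t+1}-P_t)$. All (in)equalities are a.s.; $L^0(\mathcal{G})$ denotes a.s. finite $\mathcal{G}$-measurable random variables, $\underline L^0(\mathcal{G})$ those with values in $\mathbb{R}\cup\{-\infty\}$. For vectors, $xy$ is the Euclidean inner product. Efforts: $A=(A_t)_{t\in\mathbb{T}}$ with $A_t\in L^0(\mathcal{F}_t)^N$; cost $c_t:\mathbb{R}^N\to\mathbb{R}$ strictly convex (applied pointwise); wealth $W^A_t=W_0+\sum_{s<t}A_s\Delta\tilde P_{s+1}$, $W_0\in\mathbb{R}$, $\Delta W^A_{t+1}=A_t\Delta\tilde P_{t+1}$. Preferences: Agent $U^a=(U^a_t)$ and Principal $U^p=(U^p_t)$, $U^l_t:L^0(\mathcal{F}_T)\to\underline L^0(\mathcal{F}_t)$, each satisfying the usual conditions: normalized ($U_t(0)=0$), proper, monotone, $\mathcal{F}_t$-conditionally concave, $\mathcal{F}_t$-translation invariant ($U_t(X+Y)=U_t(X)+Y$ for $Y\in L^0(\mathcal{F}_t)$) and time consistent ($U_{t+1}(X)\ge U_{t+1}(Y)\Rightarrow U_t(X)\ge U_t(Y)$). Contracts: a pair $(\Theta,\beta)$ with $\Theta$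 $\mathcal{F}_T$-measurable and $\beta=(\beta_t)$, $\beta_t\in L^0(\mathcal{F}_t)$; it pays $S(A)=\Theta+\sum_{t<T}\beta_t\Delta W^A_{t+1}$ to the Agent when he chooses effort $A$. The Agent's time-0 utility is $U^a_0(S(A)-\sum_t c_t(A_t))$; the Principal's is $U^p_0(W^A_T-S(A))$ with $A$ the Agent's optimal effort. Agent's recursion: $H_T=\Theta$, $H_t=\operatorname*{ess\,sup}_{A\in L^0(\mathcal{F}_t)^N}\{U^a_t(H_{t+1}+\beta_tA\Delta\tilde P_{t+1})-c_t(A)\}$. The contract is individually rational if the Agent's optimal time-0 utility is at least the reservation utility $R\in\mathbb{R}$, and incentive compatible if all essential suprema in the Agent's recursion are attained. Incentive set: for $\beta\in L^0(\mathcal{F}_t)$, $\mathbb{C}_t(\beta)$ is the set of $(A,\Gamma)\in L^0(\mathcal{F}_t)^N\times L^0(\mathcal{F}_{t+1})$ such that for all $\bar A\in L^0(\mathcal{F}_t)^N$: $U^a_t(\Gamma)-c_t(A)\ge U^a_t(\Gamma+\beta(\bar A-A)\Delta\tilde P_{t+1})-c_t(\bar A)$. Principal's recursion: $h_T=0$, $h_t=\operatorname*{ess\,sup}\{U^a_t(\Gamma)-c_t(A)+U^p_t(h_{t+1}+A\Delta\tilde P_{t+1}-\Gamma)\}$, the supremum over $\beta\in L^0(\mathcal{F}_t)$ and $(A,\Gamma)\in\mathbb{C}_t(\beta)$. *)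

theory Defs
  imports "HOL-Probability.Probability"
begin

definition Fil :: "'w measure \<Rightarrow> (nat \<Rightarrow> 'w \<Rightarrow> real^'n) \<Rightarrow> nat \<Rightarrow> 'w measure" where
  "Fil M P t = sigma (space M) {P s -` B \<inter> space M | s B. s \<le> t \<and> B \<in> sets borel}"

definition dPt :: "(nat \<Rightarrow> 'w \<Rightarrow> real^'n) \<Rightarrow> nat \<Rightarrow> 'w \<Rightarrow> real^'n" where
  "dPt P t \<omega> = (\<chi> i. (P (Suc t) \<omega> $ i - P t \<omega> $ i) / P t \<omega> $ i)"

definition wealth :: "real \<Rightarrow> (nat \<Rightarrow> 'w \<Rightarrow> real^'n) \<Rightarrow> (nat \<Rightarrow> 'w \<Rightarrow> real^'n) \<Rightarrow> nat \<Rightarrow> 'w \<Rightarrow> real" where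
  "wealth W0 P A t \<omega> = W0 + (\<Sum>s<t. A s \<omega> \<bullet> dPt P s \<omega>)"

definition strictly_convex :: "(real^'n \<Rightarrow> real) \<Rightarrow> bool" where
  "strictly_convex f \<longleftrightarrow>
     (\<forall>x y u. x \<noteq> y \<longrightarrow> 0 < u \<longrightarrow> u < 1 \<longrightarrow>
        f (u *\<^sub>R x + (1 - u) *\<^sub>R y) < u * f x + (1 - u) * f y)"

text \<open>A real-valued F-measurable function is an element of L0(F); an ereal-valued F-measurable
  function that is a.s. not +infinity is an element of underline L0(F).\<close>

definition cond_util ::
  "'w measure \<Rightarrow> (nat \<Rightarrow> 'w \<Rightarrow> real^'n) \<Rightarrow> nat \<Rightarrow> (nat \<Rightarrow> ('w \<Rightarrow> real) \<Rightarrow> 'w \<Rightarrow> ereal) \<Rightarrow> bool" where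
  "cond_util M P T U \<longleftrightarrow>
    \<comment> \<open>maps L0(F_T) into underline L0(F_t)\<close>
    (\<forall>t\<le>T. \<forall>X\<in>borel_measurable (Fil M P T).
        U t X \<in> borel_measurable (Fil M P t) \<and> (AE \<omega> in M. U t X \<omega> \<noteq> \<infinity>))
    \<comment> \<open>normalized\<close>
  \<and> (\<forall>t\<le>T. AE \<omega> in M. U t (\<lambda>_. 0) \<omega> = 0)
    \<comment> \<open>proper (values below +infinity, and the domain is non-empty)\<close>
  \<and> (\<forall>t\<le>T. \<exists>X\<in>borel_measurable (Fil M P T). AE \<omega> in M. U t X \<omega> \<noteq> - \<infinity>)
    \<comment> \<open>monotone\<close>
  \<and> (\<forall>t\<le>T. \<forall>X\<in>borel_measurable (Fil M P T). \<forall>Y\<in>borel_measurable (Fil M P T).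
        (AE \<omega> in M. X \<omega> \<le> Y \<omega>) \<longrightarrow> (AE \<omega> in M. U t X \<omega> \<le> U t Y \<omega>))
    \<comment> \<open>F_t-conditionally concave\<close>
  \<and> (\<forall>t\<le>T. \<forall>X\<in>borel_measurable (Fil M P T). \<forall>Y\<in>borel_measurable (Fil M P T).
        \<forall>l\<in>borel_measurable (Fil M P t).
        (AE \<omega> in M. 0 \<le> l \<omega> \<and> l \<omega> \<le> 1) \<longrightarrow>
        (AE \<omega> in M. ereal (l \<omega>) * U t X \<omega> + ereal (1 - l \<omega>) * U t Y \<omega>
                      \<le> U t (\<lambda>\<omega>. l \<omega> * X \<omega> + (1 - l \<omega>) * Y \<omega>) \<omega>))
    \<comment> \<open>F_t-translation invariant\<close>
  \<and> (\<forall>t\<le>T. \<forall>X\<in>borel_measurable (Fil M P T). \<forall>Y\<in>borel_measurable (Fil M P t).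
        AE \<omega> in M. U t (\<lambda>\<omega>. X \<omega> + Y \<omega>) \<omega> = U t X \<omega> + ereal (Y \<omega>))
    \<comment> \<open>time consistent\<close>
  \<and> (\<forall>t<T. \<forall>X\<in>borel_measurable (Fil M P T). \<forall>Y\<in>borel_measurable (Fil M P T).
        (AE \<omega> in M. U (Suc t) X \<omega> \<ge> U (Suc t) Y \<omega>) \<longrightarrow> (AE \<omega> in M. U t X \<omega> \<ge> U t Y \<omega>))"

definition is_esssup :: "'w measure \<Rightarrow> 'w measure \<Rightarrow> ('w \<Rightarrow> ereal) set \<Rightarrow> ('w \<Rightarrow> ereal) \<Rightarrow> bool" where
  "is_esssup M G Fam X \<longleftrightarrow>
     X \<in> borel_measurable G
   \<and> (\<forall>f\<in>Fam. AE \<omega> in M. f \<omega> \<le> X \<omega>)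
   \<and> (\<forall>Y\<in>borel_measurable G. (\<forall>f\<in>Fam. AE \<omega> in M. f \<omega> \<le> Y \<omega>) \<longrightarrow> (AE \<omega> in M. X \<omega> \<le> Y \<omega>))"

definition pay :: "(nat \<Rightarrow> 'w \<Rightarrow> real^'n) \<Rightarrow> nat \<Rightarrow> ('w \<Rightarrow> real) \<Rightarrow> (nat \<Rightarrow> 'w \<Rightarrow> real)
                   \<Rightarrow> (nat \<Rightarrow> 'w \<Rightarrow> real^'n) \<Rightarrow> 'w \<Rightarrow> real" where
  "pay P T Theta beta A \<omega> = Theta \<omega> + (\<Sum>t<T. beta t \<omega> * (A t \<omega> \<bullet> dPt P t \<omega>))"

definition is_contract :: "'w measure \<Rightarrow> (nat \<Rightarrow> 'w \<Rightarrow> real^'n) \<Rightarrow> nat \<Rightarrow> ('w \<Rightarrow> real)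
                           \<Rightarrow> (nat \<Rightarrow> 'w \<Rightarrow> real) \<Rightarrow> bool" where
  "is_contract M P T Theta beta \<longleftrightarrow>
     Theta \<in> borel_measurable (Fil M P T) \<and> (\<forall>t<T. beta t \<in> borel_measurable (Fil M P t))"

definition agent_obj :: "(nat \<Rightarrow> 'w \<Rightarrow> real^'n) \<Rightarrow> (nat \<Rightarrow> ('w \<Rightarrow> real) \<Rightarrow> 'w \<Rightarrow> ereal)
      \<Rightarrow> (nat \<Rightarrow> real^'n \<Rightarrow> real) \<Rightarrow> nat \<Rightarrow> ('w \<Rightarrow> real) \<Rightarrow> ('w \<Rightarrow> real) \<Rightarrow> ('w \<Rightarrow> real^'n) \<Rightarrow> 'w \<Rightarrow> ereal" where
  "agent_obj P Ua c t Hn b a \<omega> =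
     Ua t (\<lambda>\<omega>. Hn \<omega> + b \<omega> * (a \<omega> \<bullet> dPt P t \<omega>)) \<omega> - ereal (c t (a \<omega>))"

definition agent_sol :: "'w measure \<Rightarrow> (nat \<Rightarrow> 'w \<Rightarrow> real^'n) \<Rightarrow> nat
      \<Rightarrow> (nat \<Rightarrow> ('w \<Rightarrow> real) \<Rightarrow> 'w \<Rightarrow> ereal) \<Rightarrow> (nat \<Rightarrow> real^'n \<Rightarrow> real)
      \<Rightarrow> ('w \<Rightarrow> real) \<Rightarrow> (nat \<Rightarrow> 'w \<Rightarrow> real) \<Rightarrow> (nat \<Rightarrow> 'w \<Rightarrow> real) \<Rightarrow> bool" where
  "agent_sol M P T Ua c Theta beta H \<longleftrightarrow>
     (\<forall>t\<le>T. H t \<in> borel_measurable (Fil M P t))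
   \<and> (AE \<omega> in M. H T \<omega> = Theta \<omega>)
   \<and> (\<forall>t<T. is_esssup M (Fil M P t)
              {agent_obj P Ua c t (H (Suc t)) (beta t) a | a. a \<in> borel_measurable (Fil M P t)}
              (\<lambda>\<omega>. ereal (H t \<omega>)))"

definition agent_opt_effort :: "'w measure \<Rightarrow> (nat \<Rightarrow> 'w \<Rightarrow> real^'n) \<Rightarrow> nat
      \<Rightarrow> (nat \<Rightarrow> ('w \<Rightarrow> real) \<Rightarrow> 'w \<Rightarrow> ereal) \<Rightarrow> (nat \<Rightarrow> real^'n \<Rightarrow> real)
      \<Rightarrow> (nat \<Rightarrow> 'w \<Rightarrow> real) \<Rightarrow> (nat \<Rightarrow> 'w \<Rightarrow> real) \<Rightarrow> (nat \<Rightarrow> 'w \<Rightarrow> real^'n) \<Rightarrow> bool" where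
  "agent_opt_effort M P T Ua c beta H A \<longleftrightarrow>
     (\<forall>t<T. A t \<in> borel_measurable (Fil M P t)
          \<and> (AE \<omega> in M. agent_obj P Ua c t (H (Suc t)) (beta t) (A t) \<omega> = ereal (H t \<omega>)))"

definition incentive_compatible :: "'w measure \<Rightarrow> (nat \<Rightarrow> 'w \<Rightarrow> real^'n) \<Rightarrow> nat
      \<Rightarrow> (nat \<Rightarrow> ('w \<Rightarrow> real) \<Rightarrow> 'w \<Rightarrow> ereal) \<Rightarrow> (nat \<Rightarrow> real^'n \<Rightarrow> real)
      \<Rightarrow> ('w \<Rightarrow> real) \<Rightarrow> (nat \<Rightarrow> 'w \<Rightarrow> real) \<Rightarrow> bool" where
  "incentive_compatible M P T Ua c Theta beta \<longleftrightarrow>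
     (\<exists>H A. agent_sol M P T Ua c Theta beta H \<and> agent_opt_effort M P T Ua c beta H A)"

definition individually_rational :: "'w measure \<Rightarrow> real \<Rightarrow> (nat \<Rightarrow> 'w \<Rightarrow> real) \<Rightarrow> bool" where
  "individually_rational M R H \<longleftrightarrow> (AE \<omega> in M. R \<le> H 0 \<omega>)"

definition in_incentive_set :: "'w measure \<Rightarrow> (nat \<Rightarrow> 'w \<Rightarrow> real^'n)
      \<Rightarrow> (nat \<Rightarrow> ('w \<Rightarrow> real) \<Rightarrow> 'w \<Rightarrow> ereal) \<Rightarrow> (nat \<Rightarrow> real^'n \<Rightarrow> real)
      \<Rightarrow> nat \<Rightarrow> ('w \<Rightarrow> real) \<Rightarrow> ('w \<Rightarrow> real^'n) \<Rightarrow> ('w \<Rightarrow> real) \<Rightarrow> bool" where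
  "in_incentive_set M P Ua c t b a Gam \<longleftrightarrow>
     a \<in> borel_measurable (Fil M P t) \<and> Gam \<in> borel_measurable (Fil M P (Suc t))
   \<and> (\<forall>a'\<in>borel_measurable (Fil M P t). AE \<omega> in M.
        Ua t Gam \<omega> - ereal (c t (a \<omega>))
          \<ge> Ua t (\<lambda>\<omega>. Gam \<omega> + b \<omega> * ((a' \<omega> - a \<omega>) \<bullet> dPt P t \<omega>)) \<omega> - ereal (c t (a' \<omega>)))"

definition principal_obj :: "(nat \<Rightarrow> 'w \<Rightarrow> real^'n)
      \<Rightarrow> (nat \<Rightarrow> ('w \<Rightarrow> real) \<Rightarrow> 'w \<Rightarrow> ereal) \<Rightarrow> (nat \<Rightarrow> ('w \<Rightarrow> real) \<Rightarrow> 'w \<Rightarrow> ereal)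
      \<Rightarrow> (nat \<Rightarrow> real^'n \<Rightarrow> real) \<Rightarrow> nat \<Rightarrow> ('w \<Rightarrow> real) \<Rightarrow> ('w \<Rightarrow> real^'n) \<Rightarrow> ('w \<Rightarrow> real)
      \<Rightarrow> 'w \<Rightarrow> ereal" where
  "principal_obj P Ua Up c t hn a Gam \<omega> =
     Ua t Gam \<omega> - ereal (c t (a \<omega>)) + Up t (\<lambda>\<omega>. hn \<omega> + a \<omega> \<bullet> dPt P t \<omega> - Gam \<omega>) \<omega>"

definition principal_sol :: "'w measure \<Rightarrow> (nat \<Rightarrow> 'w \<Rightarrow> real^'n) \<Rightarrow> nat
      \<Rightarrow> (nat \<Rightarrow> ('w \<Rightarrow> real) \<Rightarrow> 'w \<Rightarrow> ereal) \<Rightarrow> (nat \<Rightarrow> ('w \<Rightarrow> real) \<Rightarrow> 'w \<Rightarrow> ereal)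
      \<Rightarrow> (nat \<Rightarrow> real^'n \<Rightarrow> real) \<Rightarrow> (nat \<Rightarrow> 'w \<Rightarrow> real) \<Rightarrow> bool" where
  "principal_sol M P T Ua Up c h \<longleftrightarrow>
     (\<forall>t\<le>T. h t \<in> borel_measurable (Fil M P t))
   \<and> (AE \<omega> in M. h T \<omega> = 0)
   \<and> (\<forall>t<T. is_esssup M (Fil M P t)
              {principal_obj P Ua Up c t (h (Suc t)) a Gam | b a Gam.
                  b \<in> borel_measurable (Fil M P t) \<and> in_incentive_set M P Ua c t b a Gam}
              (\<lambda>\<omega>. ereal (h t \<omega>)))"

end

theory Submission
  imports Defs
begin

text \<open>
  For an incentive compatible contract with Agent value process H, the Agent's optimal step
  (A'_t, H_{t+1} + b_t A'_t \<Delta>P_{t+1}) lies in the incentive set C_t(b_t), so it is admissible in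
  the Principal's recursion.  Translation invariance and time consistency of U^p then give, by
  backward induction, U^p_t(W_T - S) \<le> W_t - (\<Sum>_{s<t} b_s \<Delta>W_{s+1}) - H_t + h_t, and individual
  rationality H_0 \<ge> R yields the bound W_0 - R + h_0.  For the contract built from the maximizers
  the Agent's value process is explicit,
  H_t = R + \<Sum>_{s<t} (\<Gamma>_{s+1} - U^a_s(\<Gamma>_{s+1}) + c_s(A_s) - \<beta>_s A_s \<Delta>P_{s+1}),
  each step of his recursion is attained at A_t (this is the incentive-set condition), and the same
  induction, now with equalities, shows that the Principal obtains W_0 - R + h_0.
\<close>

lemma space_Fil [simp]: "space (Fil M P t) = space M"
  unfolding Fil_def by (rule space_measure_of) auto

lemma sets_Fil:
  "sets (Fil M P t) = sigma_sets (space M) {P s -` B \<inter> space M | s B. s \<le> t \<and> B \<in> sets borel}"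
  unfolding Fil_def by (rule sets_measure_of) auto

lemma measurable_Fil_mono:
  assumes "s \<le> t" "f \<in> measurable (Fil M P s) N"
  shows "f \<in> measurable (Fil M P t) N"
proof -
  have "sets (Fil M P s) \<subseteq> sets (Fil M P t)"
    unfolding sets_Fil by (intro sigma_sets_mono') (use assms(1) order_trans in blast)
  then show ?thesis
    using assms(2) unfolding measurable_def by auto
qed

lemma price_measurable_Fil:
  fixes P :: "nat \<Rightarrow> 'w \<Rightarrow> real^'n"
  assumes "s \<le> t"
  shows "P s \<in> borel_measurable (Fil M P t)"
proof (rule measurableI)
  fix B :: "(real^'n) set"
  assume "B \<in> sets borel"
  then show "P s -` B \<inter> space (Fil M P t) \<in> sets (Fil M P t)"
    unfolding sets_Fil using assms by auto
qed auto

lemma gain_measurable_Fil: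
  fixes P :: "nat \<Rightarrow> 'w \<Rightarrow> real^'n" and a :: "'w \<Rightarrow> real^'n"
  assumes "a \<in> borel_measurable (Fil M P t)"
  shows "(\<lambda>\<omega>. a \<omega> \<bullet> dPt P t \<omega>) \<in> borel_measurable (Fil M P (Suc t))"
proof -
  have a: "a \<in> borel_measurable (Fil M P (Suc t))"
    using measurable_Fil_mono[OF _ assms] by simp
  have P: "P t \<in> borel_measurable (Fil M P (Suc t))" "P (Suc t) \<in> borel_measurable (Fil M P (Suc t))"
    by (simp_all add: price_measurable_Fil)
  show ?thesis
    unfolding inner_vec_def dPt_def vec_lambda_beta inner_real_def
    by (intro borel_measurable_sum borel_measurable_times borel_measurable_divide
        borel_measurable_diff measurable_compose[OF _ borel_measurable_nth] a P)
qed

lemma scaled_gain_measurable_Fil: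
  fixes P :: "nat \<Rightarrow> 'w \<Rightarrow> real^'n" and a :: "'w \<Rightarrow> real^'n"
  assumes "b \<in> borel_measurable (Fil M P t)" "a \<in> borel_measurable (Fil M P t)"
  shows "(\<lambda>\<omega>. b \<omega> * (a \<omega> \<bullet> dPt P t \<omega>)) \<in> borel_measurable (Fil M P (Suc t))"
  using measurable_Fil_mono[OF _ assms(1), of "Suc t"] gain_measurable_Fil[OF assms(2)]
  by (intro borel_measurable_times) auto

lemma sum_measurable_Fil:
  fixes f :: "nat \<Rightarrow> 'w \<Rightarrow> real"
  assumes "\<And>s. s < t \<Longrightarrow> f s \<in> borel_measurable (Fil M P (Suc s))"
  shows "(\<lambda>\<omega>. \<Sum>s<t. f s \<omega>) \<in> borel_measurable (Fil M P t)"
  by (intro borel_measurable_sum measurable_Fil_mono[OF _ assms]) auto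

lemma strictly_convex_imp_continuous:
  fixes f :: "real^'n \<Rightarrow> real"
  assumes "strictly_convex f"
  shows "continuous_on UNIV f"
proof (rule convex_on_continuous)
  show "convex_on UNIV f"
  proof (rule convex_onI)
    fix u :: real and x y :: "real^'n"
    assume u: "0 < u" "u < 1"
    show "f ((1 - u) *\<^sub>R x + u *\<^sub>R y) \<le> (1 - u) * f x + u * f y"
    proof (cases "x = y")
      case True
      then show ?thesis by (simp add: algebra_simps)
    next
      case False
      have "f ((1 - u) *\<^sub>R x + (1 - (1 - u)) *\<^sub>R y) < (1 - u) * f x + (1 - (1 - u)) * f y"
        by (rule assms[unfolded strictly_convex_def, rule_format, OF False]) (use u in auto)
      then show ?thesis by simp
    qed
  qed simp
qed simp

context
  fixes M :: "'w measure" and P :: "nat \<Rightarrow> 'w \<Rightarrow> real^'n" and T :: nat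
    and U :: "nat \<Rightarrow> ('w \<Rightarrow> real) \<Rightarrow> 'w \<Rightarrow> ereal"
  assumes U: "cond_util M P T U"
begin

lemma cond_util_measurable:
  "t \<le> T \<Longrightarrow> X \<in> borel_measurable (Fil M P T) \<Longrightarrow> U t X \<in> borel_measurable (Fil M P t)"
  using U[unfolded cond_util_def, THEN conjunct1] by blast

lemma cond_util_not_PInf:
  "t \<le> T \<Longrightarrow> X \<in> borel_measurable (Fil M P T) \<Longrightarrow> AE \<omega> in M. U t X \<omega> \<noteq> \<infinity>"
  using U[unfolded cond_util_def, THEN conjunct1] by blast

lemma cond_util_mono:
  "t \<le> T \<Longrightarrow> X \<in> borel_measurable (Fil M P T) \<Longrightarrow> Y \<in> borel_measurable (Fil M P T) \<Longrightarrow>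
    AE \<omega> in M. X \<omega> \<le> Y \<omega> \<Longrightarrow> AE \<omega> in M. U t X \<omega> \<le> U t Y \<omega>"
  using U[unfolded cond_util_def, THEN conjunct2, THEN conjunct2, THEN conjunct2, THEN conjunct1]
  by blast

lemma cond_util_add_adapted:
  "t \<le> T \<Longrightarrow> X \<in> borel_measurable (Fil M P T) \<Longrightarrow> Y \<in> borel_measurable (Fil M P t) \<Longrightarrow>
    AE \<omega> in M. U t (\<lambda>\<omega>. X \<omega> + Y \<omega>) \<omega> = U t X \<omega> + ereal (Y \<omega>)"
  using U[unfolded cond_util_def, THEN conjunct2, THEN conjunct2, THEN conjunct2, THEN conjunct2,
      THEN conjunct2, THEN conjunct1]
  by blast

lemma cond_util_time_consistent:
  "t < T \<Longrightarrow> X \<in> borel_measurable (Fil M P T) \<Longrightarrow> Y \<in> borel_measurable (Fil M P T) \<Longrightarrow>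
    AE \<omega> in M. U (Suc t) X \<omega> \<le> U (Suc t) Y \<omega> \<Longrightarrow> AE \<omega> in M. U t X \<omega> \<le> U t Y \<omega>"
  using U[unfolded cond_util_def, THEN conjunct2, THEN conjunct2, THEN conjunct2, THEN conjunct2,
      THEN conjunct2, THEN conjunct2]
  by blast

lemma cond_util_cong:
  assumes "t \<le> T" "X \<in> borel_measurable (Fil M P T)" "Y \<in> borel_measurable (Fil M P T)"
    and "AE \<omega> in M. X \<omega> = Y \<omega>"
  shows "AE \<omega> in M. U t X \<omega> = U t Y \<omega>"
proof -
  have "AE \<omega> in M. U t X \<omega> \<le> U t Y \<omega>"
    by (rule cond_util_mono) (use assms in auto)
  moreover have "AE \<omega> in M. U t Y \<omega> \<le> U t X \<omega>"
    by (rule cond_util_mono) (use assms in auto)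
  ultimately show ?thesis by eventually_elim auto
qed

lemma cond_util_adapted:
  assumes "t \<le> T" "Y \<in> borel_measurable (Fil M P t)"
  shows "AE \<omega> in M. U t Y \<omega> = ereal (Y \<omega>)"
proof -
  have "AE \<omega> in M. U t (\<lambda>\<omega>. 0 + Y \<omega>) \<omega> = U t (\<lambda>_. 0) \<omega> + ereal (Y \<omega>)"
    by (rule cond_util_add_adapted) (use assms in auto)
  moreover have "AE \<omega> in M. U t (\<lambda>_. 0) \<omega> = 0"
    using U[unfolded cond_util_def, THEN conjunct2, THEN conjunct1] assms(1) by blast
  ultimately show ?thesis by eventually_elim simp
qed

lemma cond_util_le_adapted_step:
  assumes "t < T" "X \<in> borel_measurable (Fil M P T)" "Y \<in> borel_measurable (Fil M P (Suc t))"
    and "AE \<omega> in M. U (Suc t) X \<omega> \<le> ereal (Y \<omega>)"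
  shows "AE \<omega> in M. U t X \<omega> \<le> U t Y \<omega>"
proof (rule cond_util_time_consistent)
  show "Y \<in> borel_measurable (Fil M P T)"
    using measurable_Fil_mono[OF _ assms(3)] assms(1) by simp
  have "AE \<omega> in M. U (Suc t) Y \<omega> = ereal (Y \<omega>)"
    by (rule cond_util_adapted) (use assms in auto)
  with assms(4) show "AE \<omega> in M. U (Suc t) X \<omega> \<le> U (Suc t) Y \<omega>"
    by eventually_elim simp
qed (use assms in auto)

lemma cond_util_eq_adapted_step:
  assumes "t < T" "X \<in> borel_measurable (Fil M P T)" "Y \<in> borel_measurable (Fil M P (Suc t))"
    and "AE \<omega> in M. U (Suc t) X \<omega> = ereal (Y \<omega>)"
  shows "AE \<omega> in M. U t X \<omega> = U t Y \<omega>"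
proof -
  have YT: "Y \<in> borel_measurable (Fil M P T)"
    using measurable_Fil_mono[OF _ assms(3)] assms(1) by simp
  have "AE \<omega> in M. U (Suc t) Y \<omega> = ereal (Y \<omega>)"
    by (rule cond_util_adapted) (use assms in auto)
  with assms(4) have eq: "AE \<omega> in M. U (Suc t) X \<omega> = U (Suc t) Y \<omega>"
    by eventually_elim simp
  have "AE \<omega> in M. U t X \<omega> \<le> U t Y \<omega>"
    by (rule cond_util_time_consistent) (use assms YT eq in auto)
  moreover have "AE \<omega> in M. U t Y \<omega> \<le> U t X \<omega>"
    by (rule cond_util_time_consistent) (use assms YT eq in auto)
  ultimately show ?thesis by eventually_elim auto
qed

end

lemma is_esssup_upper: "is_esssup M G F X \<Longrightarrow> f \<in> F \<Longrightarrow> AE \<omega> in M. f \<omega> \<le> X \<omega>"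
  unfolding is_esssup_def by blast

lemma is_esssup_least:
  "is_esssup M G F X \<Longrightarrow> Y \<in> borel_measurable G \<Longrightarrow> (\<And>f. f \<in> F \<Longrightarrow> AE \<omega> in M. f \<omega> \<le> Y \<omega>) \<Longrightarrow>
    AE \<omega> in M. X \<omega> \<le> Y \<omega>"
  unfolding is_esssup_def by blast

lemma is_esssup_AE_le:
  assumes X: "is_esssup M G F X" and Y: "is_esssup M G F' Y"
    and dom: "\<And>f. f \<in> F \<Longrightarrow> \<exists>g\<in>F'. AE \<omega> in M. f \<omega> \<le> g \<omega>"
  shows "AE \<omega> in M. X \<omega> \<le> Y \<omega>"
proof (rule is_esssup_least[OF X])
  show "Y \<in> borel_measurable G"
    using Y unfolding is_esssup_def by blast
  fix f
  assume "f \<in> F"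
  then obtain g where g: "g \<in> F'" and fg: "AE \<omega> in M. f \<omega> \<le> g \<omega>"
    using dom by blast
  from fg is_esssup_upper[OF Y g] show "AE \<omega> in M. f \<omega> \<le> Y \<omega>"
    by eventually_elim (rule order_trans)
qed

section \<open>The Agent's problem\<close>

lemma continuation_plus_gain_measurable:
  fixes P :: "nat \<Rightarrow> 'w \<Rightarrow> real^'n" and a :: "'w \<Rightarrow> real^'n"
  assumes "Hn \<in> borel_measurable (Fil M P (Suc t))"
    and "b \<in> borel_measurable (Fil M P t)" "a \<in> borel_measurable (Fil M P t)"
  shows "(\<lambda>\<omega>. Hn \<omega> + b \<omega> * (a \<omega> \<bullet> dPt P t \<omega>)) \<in> borel_measurable (Fil M P (Suc t))"
  using assms(1) scaled_gain_measurable_Fil[OF assms(2,3)] by (rule borel_measurable_add)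

lemma agent_obj_cong:
  assumes Ua: "cond_util M P T Ua" and "t < T"
    and "Hn \<in> borel_measurable (Fil M P (Suc t))" "Hn' \<in> borel_measurable (Fil M P (Suc t))"
    and "AE \<omega> in M. Hn \<omega> = Hn' \<omega>"
    and "b \<in> borel_measurable (Fil M P t)" "a \<in> borel_measurable (Fil M P t)"
  shows "AE \<omega> in M. agent_obj P Ua c t Hn b a \<omega> = agent_obj P Ua c t Hn' b a \<omega>"
proof -
  have "AE \<omega> in M. Ua t (\<lambda>\<omega>. Hn \<omega> + b \<omega> * (a \<omega> \<bullet> dPt P t \<omega>)) \<omega>
                 = Ua t (\<lambda>\<omega>. Hn' \<omega> + b \<omega> * (a \<omega> \<bullet> dPt P t \<omega>)) \<omega>"
  proof (rule cond_util_cong[OF Ua])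
    show "(\<lambda>\<omega>. Hn \<omega> + b \<omega> * (a \<omega> \<bullet> dPt P t \<omega>)) \<in> borel_measurable (Fil M P T)"
      "(\<lambda>\<omega>. Hn' \<omega> + b \<omega> * (a \<omega> \<bullet> dPt P t \<omega>)) \<in> borel_measurable (Fil M P T)"
      using measurable_Fil_mono[OF Suc_leI[OF assms(2)] continuation_plus_gain_measurable,
          OF _ assms(6,7)] assms(3,4)
      by blast+
  qed (use assms(2,5) in auto)
  then show ?thesis
    unfolding agent_obj_def by eventually_elim simp
qed

lemma agent_sol_measurable:
  "agent_sol M P T Ua c Th b H \<Longrightarrow> t \<le> T \<Longrightarrow> H t \<in> borel_measurable (Fil M P t)"
  unfolding agent_sol_def by blast

lemma agent_sol_terminal: "agent_sol M P T Ua c Th b H \<Longrightarrow> AE \<omega> in M. H T \<omega> = Th \<omega>"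
  unfolding agent_sol_def by blast

lemma agent_sol_esssup:
  "agent_sol M P T Ua c Th b H \<Longrightarrow> t < T \<Longrightarrow>
    is_esssup M (Fil M P t)
      {agent_obj P Ua c t (H (Suc t)) (b t) a | a. a \<in> borel_measurable (Fil M P t)}
      (\<lambda>\<omega>. ereal (H t \<omega>))"
  unfolding agent_sol_def by blast

lemma agent_sol_unique:
  assumes Ua: "cond_util M P T Ua" and b: "\<And>t. t < T \<Longrightarrow> b t \<in> borel_measurable (Fil M P t)"
    and H: "agent_sol M P T Ua c Th b H" and H': "agent_sol M P T Ua c Th b H'"
    and "t \<le> T"
  shows "AE \<omega> in M. H t \<omega> = H' t \<omega>"
  using \<open>t \<le> T\<close>
proof (induction rule: inc_induct)
  case base
  from agent_sol_terminal[OF H] agent_sol_terminal[OF H'] show ?case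
    by eventually_elim simp
next
  case (step n)
  have le: "AE \<omega> in M. ereal (G n \<omega>) \<le> ereal (G' n \<omega>)"
    if G: "agent_sol M P T Ua c Th b G" and G': "agent_sol M P T Ua c Th b G'"
      and eq: "AE \<omega> in M. G (Suc n) \<omega> = G' (Suc n) \<omega>" for G G'
  proof (rule is_esssup_AE_le[OF agent_sol_esssup[OF G step(2)] agent_sol_esssup[OF G' step(2)]])
    fix f
    assume "f \<in> {agent_obj P Ua c n (G (Suc n)) (b n) a | a. a \<in> borel_measurable (Fil M P n)}"
    then obtain a where f: "f = agent_obj P Ua c n (G (Suc n)) (b n) a"
      and a: "a \<in> borel_measurable (Fil M P n)"
      by blast
    have "AE \<omega> in M. f \<omega> = agent_obj P Ua c n (G' (Suc n)) (b n) a \<omega>"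
      unfolding f using step(2)
      by (intro agent_obj_cong[OF Ua step(2) _ _ eq b[OF step(2)] a] agent_sol_measurable[OF G]
          agent_sol_measurable[OF G']) simp_all
    then have "AE \<omega> in M. f \<omega> \<le> agent_obj P Ua c n (G' (Suc n)) (b n) a \<omega>"
      by eventually_elim simp
    with a show "\<exists>g\<in>{agent_obj P Ua c n (G' (Suc n)) (b n) a | a. a \<in> borel_measurable (Fil M P n)}.
        AE \<omega> in M. f \<omega> \<le> g \<omega>"
      by blast
  qed
  have "AE \<omega> in M. H' (Suc n) \<omega> = H (Suc n) \<omega>"
    using step.IH by eventually_elim simp
  from le[OF H H' step.IH] le[OF H' H this] show ?case
    by eventually_elim simp
qed

lemma agent_opt_effort_measurable:
  "agent_opt_effort M P T Ua c b H A \<Longrightarrow> t < T \<Longrightarrow> A t \<in> borel_measurable (Fil M P t)"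
  unfolding agent_opt_effort_def by blast

lemma agent_opt_effort_attains:
  "agent_opt_effort M P T Ua c b H A \<Longrightarrow> t < T \<Longrightarrow>
    AE \<omega> in M. agent_obj P Ua c t (H (Suc t)) (b t) (A t) \<omega> = ereal (H t \<omega>)"
  unfolding agent_opt_effort_def by blast

lemma agent_opt_effort_transfer:
  assumes Ua: "cond_util M P T Ua" and b: "\<And>t. t < T \<Longrightarrow> b t \<in> borel_measurable (Fil M P t)"
    and H: "agent_sol M P T Ua c Th b H" and H': "agent_sol M P T Ua c Th b H'"
    and A: "agent_opt_effort M P T Ua c b H A"
  shows "agent_opt_effort M P T Ua c b H' A"
  unfolding agent_opt_effort_def
proof (intro allI impI conjI)
  fix t
  assume t: "t < T"
  show At: "A t \<in> borel_measurable (Fil M P t)"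
    using agent_opt_effort_measurable[OF A t] .
  have "AE \<omega> in M. agent_obj P Ua c t (H' (Suc t)) (b t) (A t) \<omega>
                 = agent_obj P Ua c t (H (Suc t)) (b t) (A t) \<omega>"
    using t agent_sol_unique[OF Ua b H' H, of "Suc t"]
    by (intro agent_obj_cong[OF Ua t _ _ _ b[OF t] At] agent_sol_measurable[OF H]
        agent_sol_measurable[OF H']) simp_all
  moreover have "AE \<omega> in M. agent_obj P Ua c t (H (Suc t)) (b t) (A t) \<omega> = ereal (H t \<omega>)"
    using agent_opt_effort_attains[OF A t] .
  moreover have "AE \<omega> in M. H t \<omega> = H' t \<omega>"
    using agent_sol_unique[OF Ua b H H', of t] t by simp
  ultimately show "AE \<omega> in M. agent_obj P Ua c t (H' (Suc t)) (b t) (A t) \<omega> = ereal (H' t \<omega>)"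
    by eventually_elim simp
qed

lemma optimal_effort_in_incentive_set:
  fixes P :: "nat \<Rightarrow> 'w \<Rightarrow> real^'n"
  assumes H: "agent_sol M P T Ua c Th b H" and A: "agent_opt_effort M P T Ua c b H A"
    and t: "t < T" and b: "b t \<in> borel_measurable (Fil M P t)"
  shows "in_incentive_set M P Ua c t (b t) (A t) (\<lambda>\<omega>. H (Suc t) \<omega> + b t \<omega> * (A t \<omega> \<bullet> dPt P t \<omega>))"
    (is "in_incentive_set M P Ua c t (b t) (A t) ?G")
  unfolding in_incentive_set_def
proof (intro conjI ballI)
  show At: "A t \<in> borel_measurable (Fil M P t)"
    using agent_opt_effort_measurable[OF A t] .
  show "?G \<in> borel_measurable (Fil M P (Suc t))"
    using t by (intro continuation_plus_gain_measurable[OF _ b At] agent_sol_measurable[OF H]) simp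
  fix a' :: "'w \<Rightarrow> real^'n"
  assume a': "a' \<in> borel_measurable (Fil M P t)"
  have shift: "(\<lambda>\<omega>. ?G \<omega> + b t \<omega> * ((a' \<omega> - A t \<omega>) \<bullet> dPt P t \<omega>))
      = (\<lambda>\<omega>. H (Suc t) \<omega> + b t \<omega> * (a' \<omega> \<bullet> dPt P t \<omega>))"
    by (auto simp: algebra_simps)
  have "AE \<omega> in M. agent_obj P Ua c t (H (Suc t)) (b t) a' \<omega> \<le> ereal (H t \<omega>)"
    by (rule is_esssup_upper[OF agent_sol_esssup[OF H t]]) (use a' in blast)
  moreover have "AE \<omega> in M. Ua t ?G \<omega> - ereal (c t (A t \<omega>)) = ereal (H t \<omega>)"
    using agent_opt_effort_attains[OF A t] unfolding agent_obj_def .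
  ultimately show "AE \<omega> in M. Ua t ?G \<omega> - ereal (c t (A t \<omega>))
      \<ge> Ua t (\<lambda>\<omega>. ?G \<omega> + b t \<omega> * ((a' \<omega> - A t \<omega>) \<bullet> dPt P t \<omega>)) \<omega> - ereal (c t (a' \<omega>))"
    unfolding shift agent_obj_def by eventually_elim simp
qed

section \<open>Upper bound for the Principal\<close>

definition principal_net :: "real \<Rightarrow> (nat \<Rightarrow> 'w \<Rightarrow> real^'n) \<Rightarrow> (nat \<Rightarrow> 'w \<Rightarrow> real)
    \<Rightarrow> (nat \<Rightarrow> 'w \<Rightarrow> real^'n) \<Rightarrow> nat \<Rightarrow> 'w \<Rightarrow> real" where
  "principal_net W0 P b A t \<omega> = wealth W0 P A t \<omega> - (\<Sum>s<t. b s \<omega> * (A s \<omega> \<bullet> dPt P s \<omega>))"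

lemma principal_net_measurable:
  assumes "\<And>s. s < t \<Longrightarrow> b s \<in> borel_measurable (Fil M P s)"
    and "\<And>s. s < t \<Longrightarrow> A s \<in> borel_measurable (Fil M P s)"
  shows "principal_net W0 P b A t \<in> borel_measurable (Fil M P t)"
proof -
  have "(\<lambda>\<omega>. W0 + (\<Sum>s<t. A s \<omega> \<bullet> dPt P s \<omega> - b s \<omega> * (A s \<omega> \<bullet> dPt P s \<omega>)))
      \<in> borel_measurable (Fil M P t)"
    using assms
    by (intro borel_measurable_add borel_measurable_const sum_measurable_Fil borel_measurable_diff
        gain_measurable_Fil scaled_gain_measurable_Fil) auto
  then show ?thesis
    by (simp add: principal_net_def[abs_def] wealth_def sum_subtractf algebra_simps)
qed

lemma principal_net_Suc:
  "principal_net W0 P b A (Suc t) \<omega>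
     = principal_net W0 P b A t \<omega> + A t \<omega> \<bullet> dPt P t \<omega> - b t \<omega> * (A t \<omega> \<bullet> dPt P t \<omega>)"
  by (simp add: principal_net_def wealth_def)

lemma wealth_minus_pay:
  "wealth W0 P A T \<omega> - pay P T Th b A \<omega> = principal_net W0 P b A T \<omega> - Th \<omega>"
  by (simp add: principal_net_def pay_def)

locale principal_agent =
  fixes M :: "'w measure" and P :: "nat \<Rightarrow> 'w \<Rightarrow> real^'n" and T :: nat
    and Ua Up :: "nat \<Rightarrow> ('w \<Rightarrow> real) \<Rightarrow> 'w \<Rightarrow> ereal" and c :: "nat \<Rightarrow> real^'n \<Rightarrow> real"
    and h :: "nat \<Rightarrow> 'w \<Rightarrow> real"
  assumes Ua: "cond_util M P T Ua" and Up: "cond_util M P T Up"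
    and h: "principal_sol M P T Ua Up c h"
begin

lemma h_measurable: "t \<le> T \<Longrightarrow> h t \<in> borel_measurable (Fil M P t)"
  using h unfolding principal_sol_def by blast

lemma h_terminal: "AE \<omega> in M. h T \<omega> = 0"
  using h unfolding principal_sol_def by blast

lemma principal_obj_le_h:
  assumes "t < T" "b \<in> borel_measurable (Fil M P t)" "in_incentive_set M P Ua c t b a G"
  shows "AE \<omega> in M. principal_obj P Ua Up c t (h (Suc t)) a G \<omega> \<le> ereal (h t \<omega>)"
  by (rule is_esssup_upper[of M "Fil M P t"]) (use h assms in \<open>auto simp: principal_sol_def\<close>)

lemma principal_continuation_le:
  assumes contract: "is_contract M P T Th b" and H: "agent_sol M P T Ua c Th b H"
    and A: "agent_opt_effort M P T Ua c b H A" and "t \<le> T"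
  shows "AE \<omega> in M. Up t (\<lambda>\<omega>. wealth W0 P A T \<omega> - pay P T Th b A \<omega>) \<omega>
           \<le> ereal (principal_net W0 P b A t \<omega> - H t \<omega> + h t \<omega>)"
  using \<open>t \<le> T\<close>
proof (induction rule: inc_induct)
  let ?X = "\<lambda>\<omega>. wealth W0 P A T \<omega> - pay P T Th b A \<omega>"
  let ?Z = "principal_net W0 P b A"
  have b: "\<And>s. s < T \<Longrightarrow> b s \<in> borel_measurable (Fil M P s)"
    and Th: "Th \<in> borel_measurable (Fil M P T)"
    using contract unfolding is_contract_def by blast+
  note A_meas = agent_opt_effort_measurable[OF A] and H_meas = agent_sol_measurable[OF H]
  have Z: "\<And>s. s \<le> T \<Longrightarrow> ?Z s \<in> borel_measurable (Fil M P s)"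
    by (rule principal_net_measurable) (use b A_meas in auto)
  have X: "?X \<in> borel_measurable (Fil M P T)"
    unfolding wealth_minus_pay by (intro borel_measurable_diff Z Th) simp
  {
    case base
    have "AE \<omega> in M. Up T ?X \<omega> = ereal (?X \<omega>)"
      by (rule cond_util_adapted[OF Up order_refl X])
    moreover note agent_sol_terminal[OF H]
    ultimately show ?case
      using h_terminal by eventually_elim (simp add: wealth_minus_pay)
  next
    case (step n)
    define G where "G \<omega> = H (Suc n) \<omega> + b n \<omega> * (A n \<omega> \<bullet> dPt P n \<omega>)" for \<omega>
    define Q where "Q \<omega> = h (Suc n) \<omega> + A n \<omega> \<bullet> dPt P n \<omega> - G \<omega>" for \<omega>
    have G_meas: "G \<in> borel_measurable (Fil M P (Suc n))"
      unfolding G_def using step(2)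
      by (intro continuation_plus_gain_measurable H_meas b A_meas) auto
    have Q: "Q \<in> borel_measurable (Fil M P T)"
      unfolding Q_def using step(2) measurable_Fil_mono[OF _ G_meas, of T]
      by (intro borel_measurable_add borel_measurable_diff measurable_Fil_mono[OF _ h_measurable]
          measurable_Fil_mono[OF _ gain_measurable_Fil[OF A_meas]]) auto
    have next_eq: "(\<lambda>\<omega>. ?Z (Suc n) \<omega> - H (Suc n) \<omega> + h (Suc n) \<omega>) = (\<lambda>\<omega>. Q \<omega> + ?Z n \<omega>)"
      by (auto simp: principal_net_Suc Q_def G_def)
    have "AE \<omega> in M. Up n ?X \<omega> \<le> Up n (\<lambda>\<omega>. Q \<omega> + ?Z n \<omega>) \<omega>"
      unfolding next_eq[symmetric] using step
      by (intro cond_util_le_adapted_step[OF Up step(2) X] borel_measurable_add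
          borel_measurable_diff Z H_meas h_measurable) simp_all
    moreover have "AE \<omega> in M. Up n (\<lambda>\<omega>. Q \<omega> + ?Z n \<omega>) \<omega> = Up n Q \<omega> + ereal (?Z n \<omega>)"
      by (rule cond_util_add_adapted[OF Up _ Q Z]) (use step in auto)
    moreover have "AE \<omega> in M. principal_obj P Ua Up c n (h (Suc n)) (A n) G \<omega> \<le> ereal (h n \<omega>)"
      using principal_obj_le_h[OF step(2) b optimal_effort_in_incentive_set[OF H A step(2) b]]
        step(2) unfolding G_def[abs_def] by simp
    then have "AE \<omega> in M. Ua n G \<omega> - ereal (c n (A n \<omega>)) + Up n Q \<omega> \<le> ereal (h n \<omega>)"
      unfolding principal_obj_def Q_def .
    moreover have "AE \<omega> in M. Ua n G \<omega> - ereal (c n (A n \<omega>)) = ereal (H n \<omega>)"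
      using agent_opt_effort_attains[OF A step(2)] unfolding agent_obj_def G_def[abs_def] .
    ultimately show ?case
    proof eventually_elim
      case (elim \<omega>)
      then have "ereal (H n \<omega>) + Up n Q \<omega> \<le> ereal (h n \<omega>)"
        by simp
      then have "Up n Q \<omega> + ereal (?Z n \<omega>) \<le> ereal (?Z n \<omega> - H n \<omega> + h n \<omega>)"
        by (cases "Up n Q \<omega>") auto
      with elim(1,2) show ?case
        by simp
    qed
  }
qed

theorem principal_utility_le:
  assumes "is_contract M P T Th b" "agent_sol M P T Ua c Th b H"
    and "agent_opt_effort M P T Ua c b H A" and IR: "individually_rational M R H"
  shows "AE \<omega> in M. Up 0 (\<lambda>\<omega>. wealth W0 P A T \<omega> - pay P T Th b A \<omega>) \<omega> \<le> ereal (W0 - R + h 0 \<omega>)"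
  using principal_continuation_le[OF assms(1-3) le0, of W0] IR
  unfolding individually_rational_def
proof eventually_elim
  case (elim \<omega>)
  then show ?case
    by (auto simp: principal_net_def wealth_def elim: order_trans)
qed

end

section \<open>The optimal contract\<close>

locale optimal_contract = principal_agent M P T Ua Up c h
  for M :: "'w measure" and P :: "nat \<Rightarrow> 'w \<Rightarrow> real^'n" and T :: nat
    and Ua Up :: "nat \<Rightarrow> ('w \<Rightarrow> real) \<Rightarrow> 'w \<Rightarrow> ereal" and c :: "nat \<Rightarrow> real^'n \<Rightarrow> real"
    and h :: "nat \<Rightarrow> 'w \<Rightarrow> real" +
  fixes R :: real and beta :: "nat \<Rightarrow> 'w \<Rightarrow> real"
    and A :: "nat \<Rightarrow> 'w \<Rightarrow> real^'n" and Gam :: "nat \<Rightarrow> 'w \<Rightarrow> real"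
  assumes cost: "\<And>t. t < T \<Longrightarrow> strictly_convex (c t)"
    and beta_measurable: "\<And>t. t < T \<Longrightarrow> beta t \<in> borel_measurable (Fil M P t)"
    and incentive: "\<And>t. t < T \<Longrightarrow> in_incentive_set M P Ua c t (beta t) (A t) (Gam t)"
    and maximizer: "\<And>t. t < T \<Longrightarrow>
      AE \<omega> in M. principal_obj P Ua Up c t (h (Suc t)) (A t) (Gam t) \<omega> = ereal (h t \<omega>)"
begin

definition agent_util_Gam :: "nat \<Rightarrow> 'w \<Rightarrow> real" where
  "agent_util_Gam t \<omega> = real_of_ereal (Ua t (Gam t) \<omega>)"

definition theta :: "'w \<Rightarrow> real" where
  "theta \<omega> = (\<Sum>t<T. Gam t \<omega> - agent_util_Gam t \<omega> + c t (A t \<omega>))"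

definition terminal_pay :: "'w \<Rightarrow> real" where
  "terminal_pay \<omega> = R + theta \<omega> - (\<Sum>t<T. beta t \<omega> * (A t \<omega> \<bullet> dPt P t \<omega>))"

definition agent_value :: "nat \<Rightarrow> 'w \<Rightarrow> real" where
  "agent_value t \<omega> = R + (\<Sum>s<t. Gam s \<omega> - agent_util_Gam s \<omega> + c s (A s \<omega>)
                                  - beta s \<omega> * (A s \<omega> \<bullet> dPt P s \<omega>))"

definition principal_value :: "real \<Rightarrow> nat \<Rightarrow> 'w \<Rightarrow> real" where
  "principal_value W0 t \<omega> = W0 - R + (\<Sum>s<t. A s \<omega> \<bullet> dPt P s \<omega> - Gam s \<omega> + agent_util_Gam s \<omega>
                                               - c s (A s \<omega>)) + h t \<omega>"

lemma A_measurable: "t < T \<Longrightarrow> A t \<in> borel_measurable (Fil M P t)"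
  using incentive[unfolded in_incentive_set_def] by blast

lemma Gam_measurable: "t < T \<Longrightarrow> Gam t \<in> borel_measurable (Fil M P (Suc t))"
  using incentive[unfolded in_incentive_set_def] by blast

lemma incentive_ineq:
  "t < T \<Longrightarrow> a \<in> borel_measurable (Fil M P t) \<Longrightarrow>
    AE \<omega> in M. Ua t (\<lambda>\<omega>. Gam t \<omega> + beta t \<omega> * ((a \<omega> - A t \<omega>) \<bullet> dPt P t \<omega>)) \<omega> - ereal (c t (a \<omega>))
      \<le> Ua t (Gam t) \<omega> - ereal (c t (A t \<omega>))"
  using incentive[unfolded in_incentive_set_def] by blast

lemma Gam_measurable_terminal: "t < T \<Longrightarrow> Gam t \<in> borel_measurable (Fil M P T)"
  by (rule measurable_Fil_mono[OF Suc_leI Gam_measurable])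

lemma principal_arg_measurable:
  assumes "t < T"
  shows "(\<lambda>\<omega>. h (Suc t) \<omega> + A t \<omega> \<bullet> dPt P t \<omega> - Gam t \<omega>) \<in> borel_measurable (Fil M P T)"
  using assms measurable_Fil_mono[OF _ h_measurable[of "Suc t"], of T]
    measurable_Fil_mono[OF _ gain_measurable_Fil[OF A_measurable[OF assms]], of T]
  by (intro borel_measurable_diff borel_measurable_add Gam_measurable_terminal) auto

lemma cost_measurable: "t < T \<Longrightarrow> (\<lambda>\<omega>. c t (A t \<omega>)) \<in> borel_measurable (Fil M P t)"
  by (rule borel_measurable_continuous_on[OF strictly_convex_imp_continuous[OF cost] A_measurable])
    simp_all

lemma agent_util_Gam_measurable: "t < T \<Longrightarrow> agent_util_Gam t \<in> borel_measurable (Fil M P t)"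
  unfolding agent_util_Gam_def[abs_def]
  by (intro borel_measurable_real_of_ereal cond_util_measurable[OF Ua] Gam_measurable_terminal) auto

lemma maximizer_finite:
  assumes "t < T"
  shows "AE \<omega> in M. Ua t (Gam t) \<omega> = ereal (agent_util_Gam t \<omega>)
      \<and> ereal (agent_util_Gam t \<omega> - c t (A t \<omega>))
          + Up t (\<lambda>\<omega>. h (Suc t) \<omega> + A t \<omega> \<bullet> dPt P t \<omega> - Gam t \<omega>) \<omega> = ereal (h t \<omega>)"
proof -
  let ?Q = "\<lambda>\<omega>. h (Suc t) \<omega> + A t \<omega> \<bullet> dPt P t \<omega> - Gam t \<omega>"
  note Q = principal_arg_measurable[OF assms]
  have "AE \<omega> in M. Ua t (Gam t) \<omega> \<noteq> \<infinity>"
    by (rule cond_util_not_PInf[OF Ua _ Gam_measurable_terminal]) (use assms in auto)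
  moreover have "AE \<omega> in M. Up t ?Q \<omega> \<noteq> \<infinity>"
    by (rule cond_util_not_PInf[OF Up _ Q]) (use assms in auto)
  moreover have "AE \<omega> in M. Ua t (Gam t) \<omega> - ereal (c t (A t \<omega>)) + Up t ?Q \<omega> = ereal (h t \<omega>)"
    using maximizer[OF assms] unfolding principal_obj_def .
  ultimately show ?thesis
  proof eventually_elim
    case (elim \<omega>)
    then show ?case
      by (cases "Ua t (Gam t) \<omega>"; cases "Up t ?Q \<omega>") (auto simp: agent_util_Gam_def)
  qed
qed

lemma agent_value_measurable: "t \<le> T \<Longrightarrow> agent_value t \<in> borel_measurable (Fil M P t)"
  unfolding agent_value_def[abs_def]
  by (intro borel_measurable_add borel_measurable_const sum_measurable_Fil borel_measurable_diff
      Gam_measurable scaled_gain_measurable_Fil beta_measurable A_measurable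
      measurable_Fil_mono[OF _ agent_util_Gam_measurable] measurable_Fil_mono[OF _ cost_measurable])
    auto

lemma agent_value_terminal: "agent_value T = terminal_pay"
  by (rule ext) (simp add: agent_value_def terminal_pay_def theta_def sum_subtractf sum.distrib)

lemma agent_value_initial: "agent_value 0 \<omega> = R"
  by (simp add: agent_value_def)

lemma terminal_pay_measurable: "terminal_pay \<in> borel_measurable (Fil M P T)"
  using agent_value_measurable[of T] by (simp add: agent_value_terminal)

text \<open>Splits off the F_t-measurable part of the Agent's continuation value, so that the
  incentive inequality of C_t(beta_t) applies to the remaining argument of U^a_t.\<close>

lemma agent_obj_agent_value:
  assumes t: "t < T" and a: "a \<in> borel_measurable (Fil M P t)"
  shows "AE \<omega> in M. agent_obj P Ua c t (agent_value (Suc t)) (beta t) a \<omega>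
      = Ua t (\<lambda>\<omega>. Gam t \<omega> + beta t \<omega> * ((a \<omega> - A t \<omega>) \<bullet> dPt P t \<omega>)) \<omega>
        + ereal (agent_value t \<omega> - agent_util_Gam t \<omega> + c t (A t \<omega>)) - ereal (c t (a \<omega>))"
proof -
  define G where "G \<omega> = Gam t \<omega> + beta t \<omega> * ((a \<omega> - A t \<omega>) \<bullet> dPt P t \<omega>)" for \<omega>
  define K where "K \<omega> = agent_value t \<omega> - agent_util_Gam t \<omega> + c t (A t \<omega>)" for \<omega>
  have split: "(\<lambda>\<omega>. agent_value (Suc t) \<omega> + beta t \<omega> * (a \<omega> \<bullet> dPt P t \<omega>)) = (\<lambda>\<omega>. G \<omega> + K \<omega>)"
    by (rule ext) (simp add: agent_value_def G_def K_def algebra_simps)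
  have "(\<lambda>\<omega>. a \<omega> - A t \<omega>) \<in> borel_measurable (Fil M P t)"
    using a A_measurable[OF t] by (rule borel_measurable_diff)
  then have G: "G \<in> borel_measurable (Fil M P T)"
    unfolding G_def[abs_def]
    by (intro measurable_Fil_mono[OF Suc_leI[OF t]] continuation_plus_gain_measurable
        Gam_measurable beta_measurable t)
  have K: "K \<in> borel_measurable (Fil M P t)"
    unfolding K_def[abs_def] using t
    by (intro borel_measurable_add borel_measurable_diff agent_value_measurable
        agent_util_Gam_measurable cost_measurable) auto
  have "AE \<omega> in M. Ua t (\<lambda>\<omega>. G \<omega> + K \<omega>) \<omega> = Ua t G \<omega> + ereal (K \<omega>)"
    by (rule cond_util_add_adapted[OF Ua _ G K]) (use t in auto)
  then show ?thesis
    unfolding agent_obj_def split by eventually_elim (simp add: G_def[abs_def] K_def)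
qed

lemma agent_obj_le_agent_value:
  assumes t: "t < T" and a: "a \<in> borel_measurable (Fil M P t)"
  shows "AE \<omega> in M. agent_obj P Ua c t (agent_value (Suc t)) (beta t) a \<omega> \<le> ereal (agent_value t \<omega>)"
  using agent_obj_agent_value[OF assms] maximizer_finite[OF t] incentive_ineq[OF assms]
proof eventually_elim
  case (elim \<omega>)
  let ?G = "Ua t (\<lambda>\<omega>. Gam t \<omega> + beta t \<omega> * ((a \<omega> - A t \<omega>) \<bullet> dPt P t \<omega>)) \<omega>"
  from elim show ?case
    by (cases ?G) auto
qed

lemma agent_obj_maximizer:
  assumes t: "t < T"
  shows "AE \<omega> in M. agent_obj P Ua c t (agent_value (Suc t)) (beta t) (A t) \<omega> = ereal (agent_value t \<omega>)"
  using agent_obj_agent_value[OF t A_measurable[OF t]] maximizer_finite[OF t]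
  by eventually_elim simp

lemma agent_value_solves: "agent_sol M P T Ua c terminal_pay beta agent_value"
  unfolding agent_sol_def
proof (intro conjI allI impI)
  fix t
  assume t: "t < T"
  show "is_esssup M (Fil M P t)
      {agent_obj P Ua c t (agent_value (Suc t)) (beta t) a | a. a \<in> borel_measurable (Fil M P t)}
      (\<lambda>\<omega>. ereal (agent_value t \<omega>))"
    unfolding is_esssup_def
  proof (intro conjI ballI impI)
    show "(\<lambda>\<omega>. ereal (agent_value t \<omega>)) \<in> borel_measurable (Fil M P t)"
      using agent_value_measurable t by simp
    show "AE \<omega> in M. f \<omega> \<le> ereal (agent_value t \<omega>)"
      if "f \<in> {agent_obj P Ua c t (agent_value (Suc t)) (beta t) a | a. a \<in> borel_measurable (Fil M P t)}"
      for f
      using that agent_obj_le_agent_value[OF t] by blast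
    show "AE \<omega> in M. ereal (agent_value t \<omega>) \<le> Y \<omega>"
      if ub: "\<forall>f\<in>{agent_obj P Ua c t (agent_value (Suc t)) (beta t) a | a. a \<in> borel_measurable (Fil M P t)}.
            AE \<omega> in M. f \<omega> \<le> Y \<omega>" for Y
    proof -
      have "AE \<omega> in M. agent_obj P Ua c t (agent_value (Suc t)) (beta t) (A t) \<omega> \<le> Y \<omega>"
        using ub A_measurable[OF t] by blast
      with agent_obj_maximizer[OF t] show ?thesis
        by eventually_elim simp
    qed
  qed
qed (use agent_value_measurable agent_value_terminal in auto)

lemma maximizer_optimal_effort: "agent_opt_effort M P T Ua c beta agent_value A"
  unfolding agent_opt_effort_def using A_measurable agent_obj_maximizer by blast

lemma principal_value_eq:
  assumes "t \<le> T"
  shows "AE \<omega> in M. Up t (\<lambda>\<omega>. wealth W0 P A T \<omega> - pay P T terminal_pay beta A \<omega>) \<omega>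
           = ereal (principal_value W0 t \<omega>)"
  using assms
proof (induction rule: inc_induct)
  let ?X = "\<lambda>\<omega>. wealth W0 P A T \<omega> - pay P T terminal_pay beta A \<omega>"
  have X: "?X \<in> borel_measurable (Fil M P T)"
    unfolding wealth_minus_pay
    by (intro borel_measurable_diff terminal_pay_measurable principal_net_measurable
        beta_measurable A_measurable)
  have V: "principal_value W0 t \<in> borel_measurable (Fil M P t)" if "t \<le> T" for t
    unfolding principal_value_def[abs_def] using that
    by (intro borel_measurable_add borel_measurable_const sum_measurable_Fil borel_measurable_diff
        gain_measurable_Fil A_measurable Gam_measurable h_measurable
        measurable_Fil_mono[OF _ agent_util_Gam_measurable] measurable_Fil_mono[OF _ cost_measurable])
      auto
  {
    case base
    have "AE \<omega> in M. Up T ?X \<omega> = ereal (?X \<omega>)"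
      by (rule cond_util_adapted[OF Up order_refl X])
    with h_terminal show ?case
      by eventually_elim (simp add: principal_value_def wealth_def pay_def terminal_pay_def
          theta_def sum_subtractf sum.distrib)
  next
    case (step n)
    let ?Q = "\<lambda>\<omega>. h (Suc n) \<omega> + A n \<omega> \<bullet> dPt P n \<omega> - Gam n \<omega>"
    define K where "K \<omega> = principal_value W0 n \<omega> - h n \<omega> + agent_util_Gam n \<omega> - c n (A n \<omega>)" for \<omega>
    note Q = principal_arg_measurable[OF step(2)]
    have K: "K \<in> borel_measurable (Fil M P n)"
      unfolding K_def[abs_def] using step(2)
      by (intro borel_measurable_add borel_measurable_diff V h_measurable agent_util_Gam_measurable
          cost_measurable) auto
    have next_eq: "principal_value W0 (Suc n) = (\<lambda>\<omega>. ?Q \<omega> + K \<omega>)"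
      by (rule ext) (simp add: principal_value_def K_def algebra_simps)
    have "AE \<omega> in M. Up n ?X \<omega> = Up n (principal_value W0 (Suc n)) \<omega>"
      by (rule cond_util_eq_adapted_step[OF Up step(2) X V step.IH]) (use step in simp)
    moreover have "AE \<omega> in M. Up n (\<lambda>\<omega>. ?Q \<omega> + K \<omega>) \<omega> = Up n ?Q \<omega> + ereal (K \<omega>)"
      by (rule cond_util_add_adapted[OF Up _ Q K]) (use step in simp)
    ultimately show ?case
      using maximizer_finite[OF step(2)] unfolding next_eq
    proof eventually_elim
      case (elim \<omega>)
      then show ?case
        by (cases "Up n ?Q \<omega>") (auto simp: K_def)
    qed
  }
qed

end

theorem mainTheorem2:
  fixes M :: "'w measure" and P :: "nat \<Rightarrow> 'w \<Rightarrow> real^'n" and T :: nat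
    and W0 R :: real and c :: "nat \<Rightarrow> real^'n \<Rightarrow> real"
    and Ua Up :: "nat \<Rightarrow> ('w \<Rightarrow> real) \<Rightarrow> 'w \<Rightarrow> ereal"
    and h :: "nat \<Rightarrow> 'w \<Rightarrow> real"
    and beta :: "nat \<Rightarrow> 'w \<Rightarrow> real" and A :: "nat \<Rightarrow> 'w \<Rightarrow> real^'n"
    and Gam :: "nat \<Rightarrow> 'w \<Rightarrow> real"
    and Theta ThetaS :: "'w \<Rightarrow> real"
  assumes prob: "prob_space M"
    and P_meas: "\<forall>t\<le>T. P t \<in> borel_measurable M"
    and P_pos: "\<forall>t\<le>T. AE \<omega> in M. \<forall>i. 0 < P t \<omega> $ i"
    and P_ce: "\<forall>t<T. \<forall>i. AE \<omega> in M.
                 nn_cond_exp M (Fil M P t) (\<lambda>\<omega>. ennreal (P (Suc t) \<omega> $ i)) \<omega> < \<infinity>"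
    and cost: "\<forall>t<T. strictly_convex (c t)"
    and Ua: "cond_util M P T Ua" and Up: "cond_util M P T Up"
    and hsol: "principal_sol M P T Ua Up c h"
    and maxim: "\<forall>t<T. beta t \<in> borel_measurable (Fil M P t)
                  \<and> in_incentive_set M P Ua c t (beta t) (A t) (Gam t)
                  \<and> (AE \<omega> in M. principal_obj P Ua Up c t (h (Suc t)) (A t) (Gam t) \<omega> = ereal (h t \<omega>))"
    and Theta_def: "\<And>\<omega>. Theta \<omega> =
             (\<Sum>t<T. Gam t \<omega> - real_of_ereal (Ua t (Gam t) \<omega>) + c t (A t \<omega>))"
    and ThetaS_def: "\<And>\<omega>. ThetaS \<omega> = R + Theta \<omega> - (\<Sum>t<T. beta t \<omega> * (A t \<omega> \<bullet> dPt P t \<omega>))"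
  shows
    "(\<forall>Th b H A'. is_contract M P T Th b \<and> agent_sol M P T Ua c Th b H
          \<and> agent_opt_effort M P T Ua c b H A' \<and> individually_rational M R H
        \<longrightarrow> (AE \<omega> in M. Up 0 (\<lambda>\<omega>. wealth W0 P A' T \<omega> - pay P T Th b A' \<omega>) \<omega>
                          \<le> ereal (W0 - R + h 0 \<omega>)))
   \<and> (\<forall>A' \<omega>. pay P T ThetaS beta A' \<omega>
          = R + Theta \<omega> + (\<Sum>t<T. beta t \<omega> * (A' t \<omega> \<bullet> dPt P t \<omega> - A t \<omega> \<bullet> dPt P t \<omega>)))
   \<and> is_contract M P T ThetaS beta
   \<and> incentive_compatible M P T Ua c ThetaS beta
   \<and> (\<forall>H. agent_sol M P T Ua c ThetaS beta H \<longrightarrow>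
          individually_rational M R H
        \<and> (AE \<omega> in M. H 0 \<omega> = R)
        \<and> agent_opt_effort M P T Ua c beta H A
        \<and> (AE \<omega> in M. Up 0 (\<lambda>\<omega>. wealth W0 P A T \<omega> - pay P T ThetaS beta A \<omega>) \<omega>
                        = ereal (W0 - R + h 0 \<omega>)))"
proof -
  interpret optimal_contract M P T Ua Up c h R beta A Gam
    using Ua Up hsol cost maxim by unfold_locales auto
  have ThetaS: "ThetaS = terminal_pay"
    by (rule ext) (simp add: ThetaS_def Theta_def terminal_pay_def theta_def agent_util_Gam_def)
  show ?thesis
    unfolding ThetaS
  proof (intro conjI allI impI)
    show "pay P T terminal_pay beta A' \<omega>
        = R + Theta \<omega> + (\<Sum>t<T. beta t \<omega> * (A' t \<omega> \<bullet> dPt P t \<omega> - A t \<omega> \<bullet> dPt P t \<omega>))" for A' \<omega>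
      using ThetaS_def[of \<omega>] by (simp add: ThetaS pay_def right_diff_distrib sum_subtractf)
    show "is_contract M P T terminal_pay beta"
      unfolding is_contract_def using terminal_pay_measurable beta_measurable by blast
    show "incentive_compatible M P T Ua c terminal_pay beta"
      unfolding incentive_compatible_def using agent_value_solves maximizer_optimal_effort by blast
    fix H
    assume H: "agent_sol M P T Ua c terminal_pay beta H"
    show "AE \<omega> in M. H 0 \<omega> = R"
      using agent_sol_unique[OF Ua beta_measurable H agent_value_solves le0]
      by (simp add: agent_value_initial)
    then show "individually_rational M R H"
      unfolding individually_rational_def by eventually_elim simp
    show "agent_opt_effort M P T Ua c beta H A"
      by (rule agent_opt_effort_transfer[OF Ua beta_measurable agent_value_solves H
            maximizer_optimal_effort])
    show "AE \<omega> in M. Up 0 (\<lambda>\<omega>. wealth W0 P A T \<omega> - pay P T terminal_pay beta A \<omega>) \<omega>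
        = ereal (W0 - R + h 0 \<omega>)"
      using principal_value_eq[OF le0, of W0] by (simp add: principal_value_def)
  qed (use principal_utility_le in blast)
qed

end
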